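(* Let $\hat W^{\rm opt,narrow}$ be the optimal value of (P1) when all pairs are restricted to lie in $\mathcal M^{\rm narrow}$, and let $\hat W^{\rm narrow}$ be the value of the output of Algorithm IIa. Then $\hat W^{\rm narrow}\ge \hat W^{\rm opt,narrow}/(1+T+\Delta+2J)$.
   Context: Setup. Fix integers $K\ge1$, $N\ge1$, $T\ge1$, $J\ge0$, $\Delta\ge0$. Let $\{\mathcal G_1,\dots,\mathcal G_L\}$ be a partition of $\{1,\dots,K\}$. A chunk is a vector $c\in\{0,1\}^N$ whose ones form a nonempty contiguous block; ${\rm Tail}(c)$ is the largest index $i$ with $c(i)=1$; $i\in c$ means $c(i)=1$; chunks intersect if they share an index. Let $\mathcal U$ be the family of nonempty $U\subseteq\{1,\dots,K\}$ with $|U|\le T$ and $|U\cap\mathcal G_s|\le1$ for all $s$; pairs are elements of $\mathcal M=\mathcal U\times\mathcal C$. Given metrics $p(U,c)\ge0$, weights $\beta^q(U,c)\in[0,1]$ ($q=1,\dots,J$), and binary weights $\alpha^q(U,c)\in\{0,1\}$ ($q$ in a finite set $\mathcal I$) with $\sum_{q\in\mathcal I}\alpha^q(U,c)\le\Delta$ for every pair. A set $F$ of pairs is feasible if: each group meets $U$ for at most one $(U,c)\in F$; each index $i$ lies in $c$ for at most one $(U,c)\in F$; $\sum_F\beta^q\le1$ for all $q\le J$; $\sum_F\alpha^q\le1$ for all $q\in\mathcal I$. Problem (P1) maximizes $\sum_F p$ over feasible $F$. Pairs $(U,c),(U',c')$ conflict if some group meets both $U$ and $U'$, or $c,c'$ intersect,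 or some $q\in\mathcal I$ has $\alpha^q(U,c)=\alpha^q(U',c')=1$. $\mathcal M^{\rm narrow}=\{(U,c):\beta^q(U,c)\le1/2\ \forall q\le J\}$; $\max_{q\le J}\beta^q:=0$ if $J=0$. Algorithm IIa: set $p'=p$ on $\mathcal M^{\rm narrow}$ and an empty stack $S$. For $j=1,\dots,N$: let $(U^*,c^* )$ maximize $p'$ over pairs of $\mathcal M^{\rm narrow}$ with ${\rm Tail}(c)=j$; if $p'(U^*,c^* )>0$, set $\hat p=p'(U^*,c^* )$, push $(U^*,c^* )$ on $S$, and for every $(U,c)\in\mathcal M^{\rm narrow}$ with $p'(U,c)>0$ subtract $\hat p$ from $p'(U,c)$ if $(U,c)$ conflicts with $(U^*,c^* )$, and subtract $2\hat p\max_{q\le J}\beta^q(U,c)$ otherwise. Then, starting with $S'=\emptyset$, repeatedly pop the top of $S$ and add it to $S'$ if $S'$ together with it is feasible. Output $S'$ with value $\hat W^{\rm narrow}=\sum_{(U,c)\in S'}p(U,c)$. *)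

theory Defs
  imports Complex_Main "HOL-Library.Disjoint_Sets"
begin

type_synonym pair = "nat set \<times> nat set"

text \<open>Chunks: nonempty contiguous blocks of ones in a 0/1 vector of length N,
  represented by their support set {a..b} with 1 <= a <= b <= N.\<close>
definition chunks :: "nat \<Rightarrow> nat set set" where
  "chunks N = {{a..b} | a b. 1 \<le> a \<and> a \<le> b \<and> b \<le> N}"

definition Tail :: "nat set \<Rightarrow> nat" where
  "Tail c = Max c"

definition Ufam :: "nat \<Rightarrow> nat \<Rightarrow> nat set set \<Rightarrow> nat set set" where
  "Ufam K T Gs = {U. U \<noteq> {} \<and> U \<subseteq> {1..K} \<and> card U \<le> T \<and> (\<forall>G\<in>Gs. card (U \<inter> G) \<le> 1)}"

definition pairsM :: "nat \<Rightarrow> nat \<Rightarrow> nat \<Rightarrow> nat set set \<Rightarrow> pair set" where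
  "pairsM K N T Gs = Ufam K T Gs \<times> chunks N"

definition narrow :: "nat \<Rightarrow> nat \<Rightarrow> nat \<Rightarrow> nat set set \<Rightarrow> nat \<Rightarrow> (nat \<Rightarrow> pair \<Rightarrow> real) \<Rightarrow> pair set" where
  "narrow K N T Gs J \<beta> = {x \<in> pairsM K N T Gs. \<forall>q\<in>{1..J}. \<beta> q x \<le> 1/2}"

definition maxbeta :: "nat \<Rightarrow> (nat \<Rightarrow> pair \<Rightarrow> real) \<Rightarrow> pair \<Rightarrow> real" where
  "maxbeta J \<beta> x = (if J = 0 then 0 else Max ((\<lambda>q. \<beta> q x) ` {1..J}))"

definition feasible ::
  "nat set set \<Rightarrow> nat \<Rightarrow> nat \<Rightarrow> (nat \<Rightarrow> pair \<Rightarrow> real) \<Rightarrow> 'i set \<Rightarrow> ('i \<Rightarrow> pair \<Rightarrow> real) \<Rightarrow> pair set \<Rightarrow> bool" where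
  "feasible Gs N J \<beta> I \<alpha> F \<longleftrightarrow>
     (\<forall>G\<in>Gs. card {x \<in> F. fst x \<inter> G \<noteq> {}} \<le> 1) \<and>
     (\<forall>i\<in>{1..N}. card {x \<in> F. i \<in> snd x} \<le> 1) \<and>
     (\<forall>q\<in>{1..J}. (\<Sum>x\<in>F. \<beta> q x) \<le> 1) \<and>
     (\<forall>q\<in>I. (\<Sum>x\<in>F. \<alpha> q x) \<le> 1)"

definition conflict :: "nat set set \<Rightarrow> 'i set \<Rightarrow> ('i \<Rightarrow> pair \<Rightarrow> real) \<Rightarrow> pair \<Rightarrow> pair \<Rightarrow> bool" where
  "conflict Gs I \<alpha> x y \<longleftrightarrow>
     (\<exists>G\<in>Gs. fst x \<inter> G \<noteq> {} \<and> fst y \<inter> G \<noteq> {}) \<or>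
     snd x \<inter> snd y \<noteq> {} \<or>
     (\<exists>q\<in>I. \<alpha> q x = 1 \<and> \<alpha> q y = 1)"

definition Wopt_narrow ::
  "nat \<Rightarrow> nat \<Rightarrow> nat \<Rightarrow> nat set set \<Rightarrow> nat \<Rightarrow> (nat \<Rightarrow> pair \<Rightarrow> real) \<Rightarrow> 'i set \<Rightarrow> ('i \<Rightarrow> pair \<Rightarrow> real)
     \<Rightarrow> (pair \<Rightarrow> real) \<Rightarrow> real" where
  "Wopt_narrow K N T Gs J \<beta> I \<alpha> p =
     Max {sum p F | F. F \<subseteq> narrow K N T Gs J \<beta> \<and> feasible Gs N J \<beta> I \<alpha> F}"

text \<open>Phase 1 of Algorithm IIa as a relation on a run: pp j is p' after iteration j
  (pp 0 = p on narrow pairs), sel j is the pair pushed at iteration j (None if nothing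
  is pushed). Ties in the maximization are broken arbitrarily.\<close>
definition phase1_run ::
  "nat \<Rightarrow> nat \<Rightarrow> nat \<Rightarrow> nat set set \<Rightarrow> nat \<Rightarrow> (nat \<Rightarrow> pair \<Rightarrow> real) \<Rightarrow> 'i set \<Rightarrow> ('i \<Rightarrow> pair \<Rightarrow> real)
     \<Rightarrow> (pair \<Rightarrow> real) \<Rightarrow> (nat \<Rightarrow> pair \<Rightarrow> real) \<Rightarrow> (nat \<Rightarrow> pair option) \<Rightarrow> bool" where
  "phase1_run K N T Gs J \<beta> I \<alpha> p pp sel \<longleftrightarrow>
     (let Mn = narrow K N T Gs J \<beta> in
      (\<forall>x\<in>Mn. pp 0 x = p x) \<and>
      (\<forall>j\<in>{1..N}.
         let cand = {x \<in> Mn. Tail (snd x) = j} in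
         if (\<exists>y\<in>cand. pp (j-1) y > 0) then
           (\<exists>x. sel j = Some x \<and> x \<in> cand \<and> (\<forall>y\<in>cand. pp (j-1) y \<le> pp (j-1) x) \<and>
              (\<forall>y\<in>Mn. pp j y =
                 (if pp (j-1) y > 0 then
                    (if conflict Gs I \<alpha> y x then pp (j-1) y - pp (j-1) x
                     else pp (j-1) y - 2 * pp (j-1) x * maxbeta J \<beta> y)
                  else pp (j-1) y)))
         else sel j = None \<and> (\<forall>y\<in>Mn. pp j y = pp (j-1) y)))"

text \<open>The stack after phase 1, listed bottom to top (push order).\<close>
definition stack_of :: "nat \<Rightarrow> (nat \<Rightarrow> pair option) \<Rightarrow> pair list" where
  "stack_of N sel = List.map_filter sel [1..<N+1]"

fun greedy :: "(pair set \<Rightarrow> bool) \<Rightarrow> pair list \<Rightarrow> pair set \<Rightarrow> pair set" where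
  "greedy feas [] A = A"
| "greedy feas (x # xs) A = greedy feas xs (if feas (insert x A) then insert x A else A)"

definition output_IIa ::
  "nat \<Rightarrow> nat set set \<Rightarrow> nat \<Rightarrow> (nat \<Rightarrow> pair \<Rightarrow> real) \<Rightarrow> 'i set \<Rightarrow> ('i \<Rightarrow> pair \<Rightarrow> real)
     \<Rightarrow> (nat \<Rightarrow> pair option) \<Rightarrow> pair set" where
  "output_IIa N Gs J \<beta> I \<alpha> sel = greedy (feasible Gs N J \<beta> I \<alpha>) (rev (stack_of N sel)) {}"

end

theory Submission
  imports Defs
begin

(*
  Proposition I is proved by the local-ratio argument.  Write hp j for the current
  value p' of the pair pushed in iteration j (0 if nothing is pushed) and d j y for the
  amount subtracted from p'(y) in that iteration, and put rho = 1 + T + Delta + 2J.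

  Upper bound.  After iteration Tail(c) every narrow pair y = (U,c) has p'(y) <= 0, so
  p(y) <= sum_j d j y.  For a feasible set F of narrow pairs at most 1 + T + Delta members
  are positive and in conflict with the pair pushed at iteration j (at most one contains
  index j, at most one per group met by U*, at most one per alpha-constraint of the pushed
  pair), and the beta-constraints bound sum_F maxbeta by J; hence
  sum_F d j <= rho * hp j and p(F) <= rho * sum_j hp j.

  Lower bound.  Each pushed pair x in the output S' satisfies p(x) = hp(Tail x) + the
  charges d i x of the earlier iterations i < Tail x.  If the pair pushed at iteration i is
  rejected by the greedy phase, it conflicts with a kept pair of larger tail, or the kept
  pairs of larger tail already use more than half of some beta-budget; in both cases these
  kept pairs were charged at least hp i in iteration i.  Summing gives
  sum_j hp j <= p(S'), and the theorem follows by combining both bounds.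
*)

text \<open>The greedy second phase, for a list processed in strictly decreasing order of a key
  f: the result is feasible, and a list element is kept exactly when it can be added
  feasibly to the kept elements of larger key.  This is what allows the analysis to look
  at each rejected pair in isolation.\<close>
lemma greedy_invariants:
  fixes f :: "pair \<Rightarrow> nat"
  assumes "sorted_wrt (\<lambda>a b. f b < f a) xs" "\<forall>a\<in>A. \<forall>x\<in>set xs. f x < f a" "feas A"
  shows "feas (greedy feas xs A) \<and> greedy feas xs A \<subseteq> A \<union> set xs \<and> A \<subseteq> greedy feas xs A \<and>
    (\<forall>x\<in>set xs. feas {y\<in>greedy feas xs A. f x < f y} \<and>
       (x \<in> greedy feas xs A \<longleftrightarrow> feas (insert x {y\<in>greedy feas xs A. f x < f y})))"
  using assms
proof (induction xs arbitrary: A)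
  case Nil
  then show ?case by simp
next
  case (Cons x xs)
  define A' where "A' = (if feas (insert x A) then insert x A else A)"
  have sorted: "sorted_wrt (\<lambda>a b. f b < f a) xs" and below_x: "\<forall>z\<in>set xs. f z < f x"
    using Cons.prems(1) by auto
  have "\<forall>a\<in>A'. \<forall>z\<in>set xs. f z < f a" "feas A'"
    using Cons.prems(2,3) below_x by (auto simp: A'_def)
  note IH = Cons.IH[OF sorted this]
  have unfold: "greedy feas (x#xs) A = greedy feas xs A'" by (simp add: A'_def)
  have above_x: "{y\<in>greedy feas xs A'. f x < f y} = A"
  proof
    show "{y\<in>greedy feas xs A'. f x < f y} \<subseteq> A"
    proof
      fix y assume y: "y \<in> {y\<in>greedy feas xs A'. f x < f y}"
      hence "y \<in> A' \<union> set xs" "y \<noteq> x" using IH by auto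
      moreover have "y \<notin> set xs" using y below_x by fastforce
      ultimately show "y \<in> A" by (auto simp: A'_def split: if_splits)
    qed
    show "A \<subseteq> {y\<in>greedy feas xs A'. f x < f y}"
      using IH Cons.prems(2) by (auto simp: A'_def split: if_splits)
  qed
  have kept_x: "x \<in> greedy feas xs A' \<longleftrightarrow> feas (insert x A)"
  proof
    assume "x \<in> greedy feas xs A'"
    hence "x \<in> A'" using IH below_x by auto
    thus "feas (insert x A)"
      using Cons.prems(3) by (cases "feas (insert x A)") (auto simp: A'_def insert_absorb)
  next
    assume "feas (insert x A)"
    thus "x \<in> greedy feas xs A'" using IH by (auto simp: A'_def)
  qed
  have "A \<subseteq> A'" "A' \<subseteq> insert x A" by (auto simp: A'_def)
  have kept_above: "feas {y\<in>greedy feas xs A'. f z < f y} \<and>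
      (z \<in> greedy feas xs A' \<longleftrightarrow> feas (insert z {y\<in>greedy feas xs A'. f z < f y}))"
    if z: "z \<in> set (x # xs)" for z
  proof -
    consider "z = x" | "z \<in> set xs" using z by auto
    then show ?thesis
    proof cases
      case 1
      then show ?thesis using above_x kept_x Cons.prems(3) by simp
    next
      case 2
      then show ?thesis using IH by blast
    qed
  qed
  show ?case unfolding unfold
  proof (intro conjI)
    show "feas (greedy feas xs A')" "A \<subseteq> greedy feas xs A'"
      using IH \<open>A \<subseteq> A'\<close> by blast+
    show "greedy feas xs A' \<subseteq> A \<union> set (x # xs)" using IH \<open>A' \<subseteq> insert x A\<close> by auto
  qed (use kept_above in blast)
qed

lemma card_members_meeting_le:
  assumes "disjoint Gs" and "finite U"
  shows "card {G\<in>Gs. U \<inter> G \<noteq> {}} \<le> card U"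
proof -
  define g where "g G = (SOME u. u \<in> U \<inter> G)" for G
  have g_in: "g G \<in> U \<inter> G" if "G \<in> {G\<in>Gs. U \<inter> G \<noteq> {}}" for G
  proof -
    have "\<exists>u. u \<in> U \<inter> G" using that by blast
    thus ?thesis unfolding g_def by (rule someI_ex)
  qed
  have "inj_on g {G\<in>Gs. U \<inter> G \<noteq> {}}"
  proof (rule inj_onI)
    fix G1 G2 assume G: "G1 \<in> {G\<in>Gs. U \<inter> G \<noteq> {}}" "G2 \<in> {G\<in>Gs. U \<inter> G \<noteq> {}}" "g G1 = g G2"
    hence "G1 \<inter> G2 \<noteq> {}" using g_in[OF G(1)] g_in[OF G(2)] by auto
    thus "G1 = G2" using disjointD[OF assms(1)] G(1,2) by blast
  qed
  moreover have "g ` {G\<in>Gs. U \<inter> G \<noteq> {}} \<subseteq> U" using g_in by auto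
  ultimately show ?thesis using assms(2) by (rule card_inj_on_le)
qed

lemma card_weight_one_le_one:
  fixes a :: "'a \<Rightarrow> real"
  assumes "finite F" and "\<forall>y\<in>F. 0 \<le> a y" and "(\<Sum>y\<in>F. a y) \<le> 1"
  shows "card {y\<in>F. a y = 1} \<le> 1"
proof -
  have "real (card {y\<in>F. a y = 1}) = (\<Sum>y\<in>{y\<in>F. a y = 1}. a y)" by simp
  also have "\<dots> \<le> (\<Sum>y\<in>F. a y)" using assms(1,2) by (intro sum_mono2) auto
  finally show ?thesis using assms(3) by simp
qed

lemma chunk_meets_contains_tail:
  fixes a b a' j :: nat
  assumes "{a..b} \<inter> {a'..j} \<noteq> {}" and "j \<le> b"
  shows "j \<in> {a..b}"
  using assms by auto

lemma card_insert_exclusive_le_one: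
  assumes "card {x\<in>A. P x} \<le> 1" and "P z \<Longrightarrow> \<forall>x\<in>A. \<not> P x"
  shows "card {x\<in>insert z A. P x} \<le> 1"
proof (cases "P z")
  case True
  hence "{x\<in>insert z A. P x} = {z}" using assms(2) by auto
  thus ?thesis by simp
next
  case False
  hence "{x\<in>insert z A. P x} = {x\<in>A. P x}" by auto
  thus ?thesis using assms(1) by simp
qed

locale IIa_run =
  fixes K N T J \<Delta> :: nat and Gs :: "nat set set" and p :: "pair \<Rightarrow> real"
    and \<beta> :: "nat \<Rightarrow> pair \<Rightarrow> real" and I :: "'i set" and \<alpha> :: "'i \<Rightarrow> pair \<Rightarrow> real"
    and pp :: "nat \<Rightarrow> pair \<Rightarrow> real" and sel :: "nat \<Rightarrow> pair option"
  assumes partition: "partition_on {1..K} Gs"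
    and finite_I: "finite I"
    and beta_range: "\<forall>x\<in>pairsM K N T Gs. \<forall>q\<in>{1..J}. 0 \<le> \<beta> q x \<and> \<beta> q x \<le> 1"
    and alpha_binary: "\<forall>x\<in>pairsM K N T Gs. \<forall>q\<in>I. \<alpha> q x \<in> {0, 1}"
    and alpha_sum: "\<forall>x\<in>pairsM K N T Gs. (\<Sum>q\<in>I. \<alpha> q x) \<le> real \<Delta>"
    and run: "phase1_run K N T Gs J \<beta> I \<alpha> p pp sel"
begin

abbreviation "Mn \<equiv> narrow K N T Gs J \<beta>"
abbreviation "PM \<equiv> pairsM K N T Gs"
abbreviation "C \<equiv> conflict Gs I \<alpha>"
abbreviation "mb \<equiv> maxbeta J \<beta>"
abbreviation "feas \<equiv> feasible Gs N J \<beta> I \<alpha>"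
abbreviation "\<tau> x \<equiv> Tail (snd x)"

lemma Mn_PM: "x \<in> Mn \<Longrightarrow> x \<in> PM"
  by (simp add: narrow_def)

lemma Mn_narrow: "x \<in> Mn \<Longrightarrow> q \<in> {1..J} \<Longrightarrow> \<beta> q x \<le> 1/2"
  by (simp add: narrow_def)

lemma pair_chunk:
  assumes "x \<in> PM"
  obtains a where "snd x = {a..\<tau> x}" "1 \<le> a" "a \<le> \<tau> x" "\<tau> x \<le> N"
proof -
  obtain a b where ab: "snd x = {a..b}" "1 \<le> a" "a \<le> b" "b \<le> N"
    using assms by (auto simp: pairsM_def chunks_def)
  have "Max {a..b} = b" using ab(3) by (intro Max_eqI) auto
  hence "\<tau> x = b" using ab(1) by (simp add: Tail_def)
  thus ?thesis using that ab by simp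
qed

lemma tail_in: "x \<in> PM \<Longrightarrow> \<tau> x \<in> snd x \<and> \<tau> x \<in> {1..N}"
  by (elim pair_chunk) auto

lemma finite_Mn: "finite Mn"
proof -
  have "Mn \<subseteq> Pow {1..K} \<times> Pow {1..N}"
    by (auto simp: narrow_def pairsM_def Ufam_def chunks_def)
  thus ?thesis by (rule finite_subset) auto
qed

lemma feasible_empty: "feas {}"
  by (simp add: feasible_def)

lemma alpha_nonneg: "x \<in> PM \<Longrightarrow> q \<in> I \<Longrightarrow> 0 \<le> \<alpha> q x"
  using alpha_binary by force

lemma maxbeta_ge: "x \<in> PM \<Longrightarrow> q \<in> {1..J} \<Longrightarrow> \<beta> q x \<le> mb x"
  by (auto simp: maxbeta_def intro!: Max_ge)

lemma maxbeta_nonneg: assumes "x \<in> PM" shows "0 \<le> mb x"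
proof (cases "J = 0")
  case False
  hence "0 \<le> \<beta> 1 x" "\<beta> 1 x \<le> mb x" using beta_range assms maxbeta_ge by auto
  thus ?thesis by linarith
qed (simp add: maxbeta_def)

lemma maxbeta_le_sum: "x \<in> PM \<Longrightarrow> mb x \<le> (\<Sum>q\<in>{1..J}. \<beta> q x)"
proof (cases "J = 0")
  case False
  assume x: "x \<in> PM"
  have "Max ((\<lambda>q. \<beta> q x) ` {1..J}) \<in> (\<lambda>q. \<beta> q x) ` {1..J}"
    using False by (intro Max_in) auto
  then obtain q where q: "q \<in> {1..J}" "Max ((\<lambda>q. \<beta> q x) ` {1..J}) = \<beta> q x" by blast
  hence "mb x = \<beta> q x" using False by (simp add: maxbeta_def)
  have "\<beta> q x \<le> (\<Sum>q\<in>{1..J}. \<beta> q x)"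
    using q beta_range x by (intro member_le_sum) auto
  thus ?thesis using \<open>mb x = \<beta> q x\<close> by simp
qed (simp add: maxbeta_def)

lemma sum_maxbeta_le:
  assumes "F \<subseteq> Mn" "feas F" shows "(\<Sum>y\<in>F. mb y) \<le> J"
proof -
  have "(\<Sum>y\<in>F. mb y) \<le> (\<Sum>y\<in>F. \<Sum>q\<in>{1..J}. \<beta> q y)"
    using assms(1) by (intro sum_mono maxbeta_le_sum Mn_PM) auto
  also have "\<dots> = (\<Sum>q\<in>{1..J}. \<Sum>y\<in>F. \<beta> q y)" by (rule sum.swap)
  also have "\<dots> \<le> (\<Sum>q\<in>{1..J}. 1)"
    using assms(2) by (intro sum_mono) (auto simp: feasible_def)
  finally show ?thesis by simp
qed

text \<open>In a feasible set, at most T pairs meet a group met by the user set of x: one per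
  group, and U meets at most card U \<le> T groups since the groups are disjoint.\<close>
lemma card_group_neighbourhood:
  assumes F: "feas F" and x: "x \<in> PM"
  shows "card (\<Union>G\<in>{G\<in>Gs. fst x \<inter> G \<noteq> {}}. {y\<in>F. fst y \<inter> G \<noteq> {}}) \<le> T"
proof -
  define Gx where "Gx = {G\<in>Gs. fst x \<inter> G \<noteq> {}}"
  have "finite Gs" using partition finite_subset[of Gs "Pow {1..K}"]
    by (auto simp: partition_on_def)
  hence "card (\<Union>G\<in>Gx. {y\<in>F. fst y \<inter> G \<noteq> {}}) \<le> (\<Sum>G\<in>Gx. card {y\<in>F. fst y \<inter> G \<noteq> {}})"
    by (intro card_UN_le) (simp add: Gx_def)
  also have "\<dots> \<le> (\<Sum>G\<in>Gx. 1)"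
    using F by (intro sum_mono) (auto simp: Gx_def feasible_def)
  also have "\<dots> = card Gx" by simp
  also have "\<dots> \<le> card (fst x)"
    unfolding Gx_def using partition x finite_subset[of "fst x" "{1..K}"]
    by (intro card_members_meeting_le) (auto simp: partition_on_def pairsM_def Ufam_def)
  also have "\<dots> \<le> T" using x by (auto simp: pairsM_def Ufam_def mem_Times_iff)
  finally show ?thesis unfolding Gx_def .
qed

text \<open>In a feasible set of narrow pairs, at most Delta pairs share an alpha-constraint
  with x: one per constraint, and x has at most Delta alpha-weights equal to 1.\<close>
lemma card_alpha_neighbourhood:
  assumes F: "F \<subseteq> Mn" "feas F" and x: "x \<in> PM"
  shows "card (\<Union>q\<in>{q\<in>I. \<alpha> q x = 1}. {y\<in>F. \<alpha> q y = 1}) \<le> \<Delta>"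
proof -
  define Ix where "Ix = {q\<in>I. \<alpha> q x = 1}"
  have finF: "finite F" using F(1) finite_Mn finite_subset by blast
  have "card (\<Union>q\<in>Ix. {y\<in>F. \<alpha> q y = 1}) \<le> (\<Sum>q\<in>Ix. card {y\<in>F. \<alpha> q y = 1})"
    using finite_I by (intro card_UN_le) (simp add: Ix_def)
  also have "\<dots> \<le> (\<Sum>q\<in>Ix. 1)"
  proof (intro sum_mono card_weight_one_le_one[OF finF])
    fix q assume "q \<in> Ix"
    thus "\<forall>y\<in>F. 0 \<le> \<alpha> q y" "(\<Sum>y\<in>F. \<alpha> q y) \<le> 1"
      using F alpha_nonneg Mn_PM by (auto simp: Ix_def feasible_def)
  qed
  also have "\<dots> = card Ix" by simp
  also have "real (card Ix) = (\<Sum>q\<in>Ix. \<alpha> q x)" by (simp add: Ix_def)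
  also have "\<dots> \<le> (\<Sum>q\<in>I. \<alpha> q x)"
    using finite_I alpha_nonneg x by (intro sum_mono2) (auto simp: Ix_def)
  also have "\<dots> \<le> \<Delta>" using alpha_sum x by auto
  finally show ?thesis unfolding Ix_def by simp
qed

lemma card_conflict_neighbourhood:
  assumes F: "F \<subseteq> Mn" "feas F" and j: "j \<in> {1..N}" and x: "x \<in> PM"
  shows "card {y\<in>F. j \<in> snd y \<or> (\<exists>G\<in>Gs. fst y \<inter> G \<noteq> {} \<and> fst x \<inter> G \<noteq> {})
                  \<or> (\<exists>q\<in>I. \<alpha> q y = 1 \<and> \<alpha> q x = 1)} \<le> 1 + T + \<Delta>"
proof -
  define B1 where "B1 = {y\<in>F. j \<in> snd y}"
  define B2 where "B2 = (\<Union>G\<in>{G\<in>Gs. fst x \<inter> G \<noteq> {}}. {y\<in>F. fst y \<inter> G \<noteq> {}})"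
  define B3 where "B3 = (\<Union>q\<in>{q\<in>I. \<alpha> q x = 1}. {y\<in>F. \<alpha> q y = 1})"
  have "card B1 \<le> 1" using F(2) j by (auto simp: B1_def feasible_def)
  moreover have "card B2 \<le> T" unfolding B2_def using card_group_neighbourhood F(2) x .
  moreover have "card B3 \<le> \<Delta>" unfolding B3_def using card_alpha_neighbourhood F x .
  moreover have "{y\<in>F. j \<in> snd y \<or> (\<exists>G\<in>Gs. fst y \<inter> G \<noteq> {} \<and> fst x \<inter> G \<noteq> {})
                  \<or> (\<exists>q\<in>I. \<alpha> q y = 1 \<and> \<alpha> q x = 1)} = B1 \<union> B2 \<union> B3"
    by (auto simp: B1_def B2_def B3_def)
  hence "card {y\<in>F. j \<in> snd y \<or> (\<exists>G\<in>Gs. fst y \<inter> G \<noteq> {} \<and> fst x \<inter> G \<noteq> {})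
                  \<or> (\<exists>q\<in>I. \<alpha> q y = 1 \<and> \<alpha> q x = 1)} \<le> card B1 + card B2 + card B3"
    by (metis add_right_mono card_Un_le order_trans)
  ultimately show ?thesis by linarith
qed

lemma run_init: "x \<in> Mn \<Longrightarrow> pp 0 x = p x"
  using run by (simp add: phase1_run_def Let_def)

lemma run_step: "j \<in> {1..N} \<Longrightarrow>
  (if (\<exists>y\<in>{x \<in> Mn. \<tau> x = j}. pp (j-1) y > 0) then
     (\<exists>x. sel j = Some x \<and> x \<in> {x \<in> Mn. \<tau> x = j} \<and>
        (\<forall>y\<in>{x \<in> Mn. \<tau> x = j}. pp (j-1) y \<le> pp (j-1) x) \<and>
        (\<forall>y\<in>Mn. pp j y =
           (if pp (j-1) y > 0 then
              (if C y x then pp (j-1) y - pp (j-1) x else pp (j-1) y - 2 * pp (j-1) x * mb y)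
            else pp (j-1) y)))
   else sel j = None \<and> (\<forall>y\<in>Mn. pp j y = pp (j-1) y))"
  using run unfolding phase1_run_def Let_def by blast

definition hp :: "nat \<Rightarrow> real" where
  "hp j = (case sel j of Some x \<Rightarrow> pp (j-1) x | None \<Rightarrow> 0)"

definition d :: "nat \<Rightarrow> pair \<Rightarrow> real" where
  "d j y = (if pp (j-1) y > 0 then (case sel j of Some x \<Rightarrow>
      (if C y x then pp (j-1) x else 2 * pp (j-1) x * mb y) | None \<Rightarrow> 0) else 0)"

lemma sel_Some:
  assumes "j \<in> {1..N}" "sel j = Some x"
  shows "x \<in> Mn \<and> \<tau> x = j \<and> 0 < hp j \<and> hp j = pp (j-1) x \<and>
    (\<forall>y\<in>Mn. \<tau> y = j \<longrightarrow> pp (j-1) y \<le> pp (j-1) x)"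
proof (cases "\<exists>y\<in>{x \<in> Mn. \<tau> x = j}. pp (j-1) y > 0")
  case True
  then obtain y where y: "y \<in> {x \<in> Mn. \<tau> x = j}" "pp (j-1) y > 0" by blast
  from True run_step[OF assms(1)] assms(2) have x: "x \<in> {x \<in> Mn. \<tau> x = j}"
    "\<forall>y\<in>{x \<in> Mn. \<tau> x = j}. pp (j-1) y \<le> pp (j-1) x" by auto
  have "pp (j-1) y \<le> pp (j-1) x" using x(2) y(1) by blast
  with y(2) have "pp (j-1) x > 0" by linarith
  moreover have "hp j = pp (j-1) x" using assms(2) by (simp add: hp_def)
  moreover have "\<forall>y\<in>Mn. \<tau> y = j \<longrightarrow> pp (j-1) y \<le> pp (j-1) x" using x(2) by blast
  ultimately show ?thesis using x(1) by simp
next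
  case False
  with run_step[OF assms(1)] assms(2) show ?thesis by auto
qed

lemma sel_None:
  assumes "j \<in> {1..N}" "sel j = None" "y \<in> Mn" "\<tau> y = j"
  shows "pp (j-1) y \<le> 0"
proof (rule ccontr)
  assume "\<not> pp (j-1) y \<le> 0"
  hence "\<exists>y\<in>{x \<in> Mn. \<tau> x = j}. pp (j-1) y > 0" using assms(3,4) by (intro bexI[of _ y]) auto
  with run_step[OF assms(1)] assms(2) show False by auto
qed

lemma step_eq:
  assumes "j \<in> {1..N}" "y \<in> Mn" shows "pp j y = pp (j-1) y - d j y"
proof (cases "sel j")
  case None
  then show ?thesis using run_step[OF assms(1)] assms(2) by (auto simp: d_def split: if_splits)
next
  case (Some x)
  have "\<exists>y\<in>{x \<in> Mn. \<tau> x = j}. pp (j-1) y > 0"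
    using sel_Some[OF assms(1) Some] by (intro bexI[of _ x]) auto
  with run_step[OF assms(1)] Some assms(2) show ?thesis by (auto simp: d_def)
qed

lemma d_nonneg:
  assumes "j \<in> {1..N}" "y \<in> Mn" shows "0 \<le> d j y"
  using sel_Some[OF assms(1)] maxbeta_nonneg[OF Mn_PM[OF assms(2)]]
  by (auto simp: d_def split: option.split)

lemma nonpos_persist:
  assumes "y \<in> Mn" "pp a y \<le> 0" "a \<le> b" "b \<le> N" shows "pp b y \<le> 0"
  using assms(3,4)
proof (induction b)
  case (Suc b)
  show ?case
  proof (cases "a = Suc b")
    case False
    hence "pp b y \<le> 0" using Suc by auto
    thus ?thesis using step_eq[of "Suc b" y] Suc.prems assms(1) by (simp add: d_def)
  qed (use assms(2) in simp)
qed (use assms(2) in simp)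

text \<open>After the iteration of its tail, every narrow pair has nonpositive value: either it
  is charged by the pushed pair, which shares the tail index and so is in conflict, or
  nothing is pushed because all candidates are already nonpositive.\<close>
lemma nonpos_after_tail:
  assumes "y \<in> Mn" "\<tau> y \<le> n" "n \<le> N" shows "pp n y \<le> 0"
proof -
  define t where "t = \<tau> y"
  have t: "t \<in> {1..N}" "t \<in> snd y" using tail_in Mn_PM assms(1) by (auto simp: t_def)
  have "pp t y \<le> 0"
  proof (cases "pp (t-1) y > 0")
    case True
    show ?thesis
    proof (cases "sel t")
      case None
      then show ?thesis using sel_None[OF t(1) None assms(1)] True t_def by simp
    next
      case (Some x)
      note x = sel_Some[OF t(1) Some]
      have "t \<in> snd x" using x tail_in Mn_PM by metis
      hence "C y x" using t(2) by (auto simp: conflict_def)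
      hence "d t y = pp (t-1) x" using True Some by (simp add: d_def)
      moreover have "pp (t-1) y \<le> pp (t-1) x" using x assms(1) t_def by auto
      ultimately show ?thesis using step_eq[OF t(1) assms(1)] by simp
    qed
  qed (use step_eq[OF t(1) assms(1)] in \<open>simp add: d_def\<close>)
  thus ?thesis using nonpos_persist[OF assms(1)] assms t_def by blast
qed

lemma telescope:
  assumes "y \<in> Mn" "n \<le> N" shows "p y - pp n y = (\<Sum>j\<in>{1..n}. d j y)"
  using assms(2)
proof (induction n)
  case (Suc n)
  then show ?case using step_eq[of "Suc n" y] assms(1) by simp
qed (simp add: run_init[OF assms(1)])

text \<open>A pair that is still positive before iteration j and conflicts with the pair pushed
  there lies in the conflict neighbourhood of j: if their chunks meet, it contains index j,
  because its tail is not before j.\<close>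
lemma positive_conflict_in_neighbourhood:
  assumes j: "j \<in> {1..N}" and x: "sel j = Some x"
    and y: "y \<in> Mn" "pp (j-1) y > 0" "C y x"
  shows "j \<in> snd y \<or> (\<exists>G\<in>Gs. fst y \<inter> G \<noteq> {} \<and> fst x \<inter> G \<noteq> {})
           \<or> (\<exists>q\<in>I. \<alpha> q y = 1 \<and> \<alpha> q x = 1)"
proof (cases "snd y \<inter> snd x = {}")
  case True
  then show ?thesis using y(3) by (auto simp: conflict_def)
next
  case False
  have "\<not> \<tau> y \<le> j - 1" using nonpos_after_tail[OF y(1)] j y(2) by fastforce
  hence "j \<le> \<tau> y" by linarith
  obtain a where a: "snd y = {a..\<tau> y}" by (meson pair_chunk Mn_PM y(1))
  obtain a' where a': "snd x = {a'..\<tau> x}" by (meson pair_chunk Mn_PM sel_Some[OF j x])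
  have "\<tau> x = j" using sel_Some[OF j x] by blast
  hence "{a..\<tau> y} \<inter> {a'..j} \<noteq> {}" using False a a' by simp
  hence "j \<in> {a..\<tau> y}" using \<open>j \<le> \<tau> y\<close> by (rule chunk_meets_contains_tail)
  thus ?thesis using a by blast
qed

lemma charge_le:
  assumes "j \<in> {1..N}" "sel j = Some x" "y \<in> Mn"
  shows "d j y \<le> (if pp (j-1) y > 0 \<and> C y x then hp j else 0) + 2 * hp j * mb y"
  using sel_Some[OF assms(1,2)] maxbeta_nonneg[OF Mn_PM[OF assms(3)]] assms(2)
  by (auto simp: d_def)

lemma sum_charge_le:
  assumes F: "F \<subseteq> Mn" "feas F" and j: "j \<in> {1..N}"
  shows "(\<Sum>y\<in>F. d j y) \<le> (1 + T + \<Delta> + 2 * J) * hp j"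
proof (cases "sel j")
  case None
  hence "d j y = 0" for y by (simp add: d_def)
  with None show ?thesis by (simp add: hp_def)
next
  case (Some x)
  have hp_pos: "0 < hp j" and x: "x \<in> PM" using sel_Some[OF j Some] Mn_PM by auto
  have finF: "finite F" using F(1) finite_Mn finite_subset by blast
  define P where "P y \<longleftrightarrow> pp (j-1) y > 0 \<and> C y x" for y
  have "{y\<in>F. P y} \<subseteq> {y\<in>F. j \<in> snd y \<or> (\<exists>G\<in>Gs. fst y \<inter> G \<noteq> {} \<and> fst x \<inter> G \<noteq> {})
                  \<or> (\<exists>q\<in>I. \<alpha> q y = 1 \<and> \<alpha> q x = 1)}"
    unfolding P_def using F(1) positive_conflict_in_neighbourhood[OF j Some] by blast
  hence "card {y\<in>F. P y} \<le> card {y\<in>F. j \<in> snd y \<or> (\<exists>G\<in>Gs. fst y \<inter> G \<noteq> {} \<and> fst x \<inter> G \<noteq> {})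
                  \<or> (\<exists>q\<in>I. \<alpha> q y = 1 \<and> \<alpha> q x = 1)}"
    using finF by (intro card_mono) auto
  also have "\<dots> \<le> 1 + T + \<Delta>" by (rule card_conflict_neighbourhood[OF F j x])
  finally have card_P: "real (card {y\<in>F. P y}) \<le> 1 + T + \<Delta>" by linarith
  have "(\<Sum>y\<in>F. d j y) \<le> (\<Sum>y\<in>F. (if P y then hp j else 0) + 2 * hp j * mb y)"
    unfolding P_def using F(1) charge_le[OF j Some] by (intro sum_mono) blast
  also have "\<dots> = hp j * card {y\<in>F. P y} + 2 * hp j * (\<Sum>y\<in>F. mb y)"
    using finF by (simp add: sum.distrib sum_distrib_left flip: sum.inter_filter)
  also have "\<dots> \<le> hp j * (1 + T + \<Delta>) + 2 * hp j * J"
    using card_P sum_maxbeta_le[OF F] hp_pos by (intro add_mono mult_left_mono) auto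
  finally show ?thesis by (simp add: algebra_simps)
qed

lemma feasible_value_le:
  assumes F: "F \<subseteq> Mn" "feas F"
  shows "(\<Sum>y\<in>F. p y) \<le> (1 + T + \<Delta> + 2 * J) * (\<Sum>j\<in>{1..N}. hp j)"
proof -
  have "(\<Sum>y\<in>F. p y) \<le> (\<Sum>y\<in>F. \<Sum>j\<in>{1..N}. d j y)"
  proof (rule sum_mono)
    fix y assume "y \<in> F"
    hence y: "y \<in> Mn" using F by auto
    have "pp N y \<le> 0" using nonpos_after_tail[OF y] tail_in[OF Mn_PM[OF y]] by auto
    thus "p y \<le> (\<Sum>j\<in>{1..N}. d j y)" using telescope[OF y order.refl] by linarith
  qed
  also have "\<dots> = (\<Sum>j\<in>{1..N}. \<Sum>y\<in>F. d j y)" by (rule sum.swap)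
  also have "\<dots> \<le> (\<Sum>j\<in>{1..N}. (1 + T + \<Delta> + 2 * J) * hp j)"
    by (intro sum_mono sum_charge_le[OF F]) 
  finally show ?thesis by (simp add: sum_distrib_left)
qed

lemma feasible_insert:
  assumes A: "finite A" "A \<subseteq> PM" "feas A" and z: "z \<in> Mn" "z \<notin> A"
    and no_conflict: "\<forall>x\<in>A. \<not> C x z"
    and half: "\<forall>q\<in>{1..J}. (\<Sum>x\<in>A. \<beta> q x) \<le> 1/2"
  shows "feas (insert z A)"
  unfolding feasible_def
proof (intro conjI ballI)
  fix G assume "G \<in> Gs"
  then show "card {x \<in> insert z A. fst x \<inter> G \<noteq> {}} \<le> 1"
    using A(3) no_conflict
    by (intro card_insert_exclusive_le_one) (auto simp: feasible_def conflict_def)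
next
  fix i assume "i \<in> {1..N}"
  then show "card {x \<in> insert z A. i \<in> snd x} \<le> 1"
    using A(3) no_conflict
    by (intro card_insert_exclusive_le_one) (auto simp: feasible_def conflict_def)
next
  fix q assume q: "q \<in> {1..J}"
  have "\<beta> q z \<le> 1/2" "(\<Sum>x\<in>A. \<beta> q x) \<le> 1/2" using Mn_narrow[OF z(1) q] half q by auto
  then show "(\<Sum>x\<in>insert z A. \<beta> q x) \<le> 1" using A(1) z(2) by simp
next
  fix q assume q: "q \<in> I"
  show "(\<Sum>x\<in>insert z A. \<alpha> q x) \<le> 1"
  proof (cases "\<alpha> q z = 1")
    case True
    have "\<alpha> q x = 0" if x: "x \<in> A" for x
    proof -
      have "\<alpha> q x \<noteq> 1" using no_conflict x True q by (auto simp: conflict_def)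
      moreover have "\<alpha> q x \<in> {0, 1}" using alpha_binary A(2) x q by blast
      ultimately show ?thesis by simp
    qed
    then show ?thesis using True A(1) z(2) by simp
  next
    case False
    hence "\<alpha> q z = 0" using alpha_binary Mn_PM[OF z(1)] q by auto
    then show ?thesis using A(1,3) z(2) q by (simp add: feasible_def)
  qed
qed

lemma set_stack: "set (stack_of N sel) = {x. \<exists>j\<in>{1..N}. sel j = Some x}"
  unfolding stack_of_def map_filter_def by (force simp: image_iff)

lemma sorted_stack: "sorted_wrt (\<lambda>a b. \<tau> a < \<tau> b) (stack_of N sel)"
  unfolding stack_of_def map_filter_def sorted_wrt_map
proof (rule sorted_wrt_mono_rel[OF _ sorted_wrt_filter[OF sorted_wrt_upt]])
  fix i j assume i: "i \<in> set (filter (\<lambda>j. sel j \<noteq> None) [1..<N + 1])"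
    and j: "j \<in> set (filter (\<lambda>j. sel j \<noteq> None) [1..<N + 1])" and "i < j"
  from i obtain xi where xi: "sel i = Some xi" "i \<in> {1..N}" by auto
  from j obtain xj where xj: "sel j = Some xj" "j \<in> {1..N}" by auto
  have "\<tau> xi = i" "\<tau> xj = j" using sel_Some[OF xi(2,1)] sel_Some[OF xj(2,1)] by blast+
  then show "\<tau> ((the \<circ> sel) i) < \<tau> ((the \<circ> sel) j)" using xi xj \<open>i < j\<close> by simp
qed

abbreviation "S' \<equiv> output_IIa N Gs J \<beta> I \<alpha> sel"

lemma output_greedy:
  "feas S' \<and> S' \<subseteq> set (stack_of N sel) \<and>
   (\<forall>x\<in>set (stack_of N sel). feas {y\<in>S'. \<tau> x < \<tau> y} \<and>
      (x \<in> S' \<longleftrightarrow> feas (insert x {y\<in>S'. \<tau> x < \<tau> y})))"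
proof -
  have "sorted_wrt (\<lambda>a b. \<tau> b < \<tau> a) (rev (stack_of N sel))"
    using sorted_stack by (simp add: sorted_wrt_rev)
  from greedy_invariants[of \<tau> _ "{}" feas, OF this _ feasible_empty] show ?thesis
    by (simp add: output_IIa_def)
qed

lemma output_pushed:
  assumes "x \<in> S'" shows "\<tau> x \<in> {1..N} \<and> sel (\<tau> x) = Some x \<and> x \<in> Mn"
proof -
  obtain j where "j \<in> {1..N}" "sel j = Some x" using output_greedy set_stack assms by blast
  thus ?thesis using sel_Some by auto
qed

lemma finite_output: "finite S'"
proof -
  have "S' \<subseteq> set (stack_of N sel)" using output_greedy by blast
  thus ?thesis by (rule finite_subset) simp
qed

lemma output_positive_before:
  assumes "x \<in> S'" "i \<le> \<tau> x" shows "0 < pp (i-1) x"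
proof (rule ccontr)
  assume "\<not> 0 < pp (i-1) x"
  hence "pp (i-1) x \<le> 0" by simp
  note x = output_pushed[OF assms(1)]
  have "i - 1 \<le> \<tau> x - 1" "\<tau> x - 1 \<le> N" using assms(2) x by auto
  with x \<open>pp (i-1) x \<le> 0\<close> have "pp (\<tau> x - 1) x \<le> 0" using nonpos_persist by blast
  moreover have "0 < hp (\<tau> x)" "hp (\<tau> x) = pp (\<tau> x - 1) x" using sel_Some x by metis+
  ultimately show False by linarith
qed

lemma output_value_split:
  assumes x: "x \<in> S'"
  shows "p x = hp (\<tau> x) + (\<Sum>i\<in>{1..N}. if i < \<tau> x then d i x else 0)"
proof -
  note xp = output_pushed[OF x]
  have "(\<Sum>i\<in>{1..N}. if i < \<tau> x then d i x else 0) = (\<Sum>i\<in>{i\<in>{1..N}. i < \<tau> x}. d i x)"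
    by (rule sum.inter_filter[symmetric]) simp
  also have "{i\<in>{1..N}. i < \<tau> x} = {1..\<tau> x - 1}" using xp by auto
  also have "(\<Sum>i\<in>{1..\<tau> x - 1}. d i x) = p x - pp (\<tau> x - 1) x"
    using telescope[of x "\<tau> x - 1"] xp by (simp add: le_diff_conv)
  also have "pp (\<tau> x - 1) x = hp (\<tau> x)" using sel_Some xp by metis
  finally show ?thesis by simp
qed

lemma charge_conflicting:
  assumes "sel i = Some xi" "0 < pp (i-1) x" "C x xi" shows "d i x = hp i"
  using assms by (simp add: d_def hp_def)

lemma charge_ge_beta:
  assumes i: "i \<in> {1..N}" "sel i = Some xi" and x: "x \<in> Mn" "0 < pp (i-1) x"
    and q: "q \<in> {1..J}"
  shows "2 * hp i * \<beta> q x \<le> d i x"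
proof -
  have hp: "0 \<le> hp i" "hp i = pp (i-1) xi" using sel_Some[OF i] by auto
  have "2 * hp i * \<beta> q x \<le> 2 * hp i * (1/2)"
    using Mn_narrow[OF x(1) q] hp by (intro mult_left_mono) auto
  moreover have "2 * hp i * \<beta> q x \<le> 2 * hp i * mb x"
    using maxbeta_ge[OF Mn_PM[OF x(1)] q] hp by (intro mult_left_mono) auto
  ultimately show ?thesis using i(2) x(2) hp by (auto simp: d_def)
qed

lemma rejection_reason:
  assumes i: "i \<in> {1..N}" "sel i = Some xi" and rejected: "xi \<notin> S'"
  defines "A \<equiv> {x\<in>S'. i < \<tau> x}"
  shows "(\<exists>x\<in>A. C x xi) \<or> (\<exists>q\<in>{1..J}. (\<Sum>x\<in>A. \<beta> q x) > 1/2)"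
proof (rule ccontr)
  assume "\<not> ?thesis"
  hence "\<forall>x\<in>A. \<not> C x xi" "\<forall>q\<in>{1..J}. (\<Sum>x\<in>A. \<beta> q x) \<le> 1/2" by (auto simp: not_less)
  moreover note xi = sel_Some[OF i]
  moreover have "finite A" "A \<subseteq> PM" "xi \<notin> A"
    using finite_output output_pushed Mn_PM rejected by (auto simp: A_def)
  moreover have "xi \<in> set (stack_of N sel)" using set_stack i by blast
  hence "feas A" "\<not> feas (insert xi A)" using output_greedy rejected xi unfolding A_def by auto
  ultimately show False using feasible_insert by blast
qed

lemma rejected_pair_charged:
  assumes i: "i \<in> {1..N}" "sel i = Some xi" and rejected: "xi \<notin> S'"
  shows "hp i \<le> (\<Sum>x\<in>{x\<in>S'. i < \<tau> x}. d i x)"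
proof -
  define A where "A = {x\<in>S'. i < \<tau> x}"
  have finA: "finite A" using finite_output by (simp add: A_def)
  have AM: "A \<subseteq> Mn" using output_pushed by (auto simp: A_def)
  have pos: "0 < pp (i-1) x" if "x \<in> A" for x
    using output_positive_before that by (auto simp: A_def)
  have "hp i \<le> (\<Sum>x\<in>A. d i x)"
    using rejection_reason[OF i rejected] unfolding A_def[symmetric]
  proof
    assume "\<exists>x\<in>A. C x xi"
    then obtain x0 where x0: "x0 \<in> A" "C x0 xi" by blast
    have "hp i = d i x0" using charge_conflicting[OF i(2) pos[OF x0(1)] x0(2)] by simp
    also have "\<dots> \<le> (\<Sum>x\<in>A. d i x)"
      using x0(1) finA d_nonneg[OF i(1)] AM by (intro member_le_sum) auto
    finally show ?thesis .
  next
    assume "\<exists>q\<in>{1..J}. (\<Sum>x\<in>A. \<beta> q x) > 1/2"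
    then obtain q where q: "q \<in> {1..J}" "(\<Sum>x\<in>A. \<beta> q x) > 1/2" by blast
    have "hp i \<le> 2 * hp i * (\<Sum>x\<in>A. \<beta> q x)"
      using q(2) sel_Some[OF i] by (simp add: mult_le_cancel_left1 mult.assoc)
    also have "\<dots> = (\<Sum>x\<in>A. 2 * hp i * \<beta> q x)" by (rule sum_distrib_left)
    also have "\<dots> \<le> (\<Sum>x\<in>A. d i x)"
      using charge_ge_beta[OF i _ _ q(1)] AM pos by (intro sum_mono) auto
    finally show ?thesis .
  qed
  thus ?thesis by (simp add: A_def)
qed
lemma pushed_value_covered:
  assumes i: "i \<in> {1..N}"
  shows "hp i \<le> (if i \<in> \<tau> ` S' then hp i else 0) + (\<Sum>x\<in>{x\<in>S'. i < \<tau> x}. d i x)"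
proof -
  have charges_nonneg: "0 \<le> (\<Sum>x\<in>{x\<in>S'. i < \<tau> x}. d i x)"
    using d_nonneg[OF i] output_pushed by (intro sum_nonneg) blast
  consider (none) "sel i = None" | (kept) xi where "sel i = Some xi" "xi \<in> S'"
    | (rejected) xi where "sel i = Some xi" "xi \<notin> S'" by (cases "sel i") auto
  then show ?thesis
  proof cases
    case none
    then show ?thesis using charges_nonneg by (simp add: hp_def)
  next
    case kept
    hence "\<tau> xi = i" using sel_Some[OF i] by blast
    hence "i \<in> \<tau> ` S'" using kept(2) by (metis image_eqI)
    then show ?thesis using charges_nonneg by simp
  next
    case rejected
    have "0 \<le> hp i" using sel_Some[OF i rejected(1)] by simp
    then show ?thesis using rejected_pair_charged[OF i rejected] by simp
  qed
qed

lemma pushed_value_le_output: "(\<Sum>i\<in>{1..N}. hp i) \<le> (\<Sum>x\<in>S'. p x)"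
proof -
  have inj: "inj_on \<tau> S'"
  proof (rule inj_onI)
    fix x y assume "x \<in> S'" "y \<in> S'" "\<tau> x = \<tau> y"
    thus "x = y" using output_pushed by (metis option.inject)
  qed
  have tails: "\<tau> ` S' \<subseteq> {1..N}" using output_pushed by blast
  have "(\<Sum>x\<in>S'. p x)
      = (\<Sum>x\<in>S'. hp (\<tau> x)) + (\<Sum>x\<in>S'. \<Sum>i\<in>{1..N}. if i < \<tau> x then d i x else 0)"
    using output_value_split by (simp add: sum.distrib)
  also have "(\<Sum>x\<in>S'. hp (\<tau> x)) = (\<Sum>i\<in>\<tau> ` S'. hp i)"
    using sum.reindex[OF inj, of hp] by simp
  also have "\<dots> = (\<Sum>i\<in>{i\<in>{1..N}. i \<in> \<tau> ` S'}. hp i)"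
    using tails by (intro sum.cong) auto
  also have "\<dots> = (\<Sum>i\<in>{1..N}. if i \<in> \<tau> ` S' then hp i else 0)"
    by (rule sum.inter_filter) simp
  also have "(\<Sum>x\<in>S'. \<Sum>i\<in>{1..N}. if i < \<tau> x then d i x else 0)
      = (\<Sum>i\<in>{1..N}. \<Sum>x\<in>S'. if i < \<tau> x then d i x else 0)"
    by (rule sum.swap)
  also have "\<dots> = (\<Sum>i\<in>{1..N}. \<Sum>x\<in>{x\<in>S'. i < \<tau> x}. d i x)"
    by (intro sum.cong refl sum.inter_filter[symmetric] finite_output)
  finally have "(\<Sum>x\<in>S'. p x)
      = (\<Sum>i\<in>{1..N}. (if i \<in> \<tau> ` S' then hp i else 0) + (\<Sum>x\<in>{x\<in>S'. i < \<tau> x}. d i x))"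
    by (simp add: sum.distrib)
  moreover have "(\<Sum>i\<in>{1..N}. hp i)
      \<le> (\<Sum>i\<in>{1..N}. (if i \<in> \<tau> ` S' then hp i else 0) + (\<Sum>x\<in>{x\<in>S'. i < \<tau> x}. d i x))"
    by (intro sum_mono pushed_value_covered)
  ultimately show ?thesis by simp
qed

lemma optimum_attained:
  obtains F where "F \<subseteq> Mn" "feas F" "Wopt_narrow K N T Gs J \<beta> I \<alpha> p = (\<Sum>x\<in>F. p x)"
proof -
  define W where "W = {sum p F | F. F \<subseteq> Mn \<and> feas F}"
  have "W \<subseteq> sum p ` Pow Mn" unfolding W_def by blast
  hence "finite W" using finite_Mn finite_subset by blast
  moreover have "W \<noteq> {}" using feasible_empty unfolding W_def by blast
  ultimately have "Max W \<in> W" by (rule Max_in)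
  thus ?thesis using that unfolding W_def Wopt_narrow_def by auto
qed

end

text \<open>Proposition I.\<close>
theorem propositionI:
  fixes K N T J \<Delta> :: nat
    and Gs :: "nat set set"
    and p :: "pair \<Rightarrow> real"
    and \<beta> :: "nat \<Rightarrow> pair \<Rightarrow> real"
    and I :: "'i set"
    and \<alpha> :: "'i \<Rightarrow> pair \<Rightarrow> real"
    and pp :: "nat \<Rightarrow> pair \<Rightarrow> real"
    and sel :: "nat \<Rightarrow> pair option"
  assumes "K \<ge> 1" and "N \<ge> 1" and "T \<ge> 1"
    and "partition_on {1..K} Gs"
    and "finite I"
    and "\<forall>x\<in>pairsM K N T Gs. p x \<ge> 0"
    and "\<forall>x\<in>pairsM K N T Gs. \<forall>q\<in>{1..J}. 0 \<le> \<beta> q x \<and> \<beta> q x \<le> 1"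
    and "\<forall>x\<in>pairsM K N T Gs. \<forall>q\<in>I. \<alpha> q x \<in> {0, 1}"
    and "\<forall>x\<in>pairsM K N T Gs. (\<Sum>q\<in>I. \<alpha> q x) \<le> real \<Delta>"
    and "phase1_run K N T Gs J \<beta> I \<alpha> p pp sel"
  shows "(\<Sum>x\<in>output_IIa N Gs J \<beta> I \<alpha> sel. p x)
           \<ge> Wopt_narrow K N T Gs J \<beta> I \<alpha> p / (1 + real T + real \<Delta> + 2 * real J)"
proof -
  interpret IIa_run K N T J \<Delta> Gs p \<beta> I \<alpha> pp sel
    by (rule IIa_run.intro) (rule assms)+
  define \<rho> where "\<rho> = 1 + real T + real \<Delta> + 2 * real J"
  obtain F where F: "F \<subseteq> Mn" "feas F" and opt: "Wopt_narrow K N T Gs J \<beta> I \<alpha> p = (\<Sum>x\<in>F. p x)"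
    by (rule optimum_attained)
  have "(\<Sum>x\<in>F. p x) \<le> \<rho> * (\<Sum>j\<in>{1..N}. hp j)"
    using feasible_value_le[OF F] by (simp add: \<rho>_def add.assoc)
  also have "\<dots> \<le> \<rho> * (\<Sum>x\<in>S'. p x)"
    using pushed_value_le_output by (intro mult_left_mono) (auto simp: \<rho>_def)
  finally show ?thesis using opt by (simp add: \<rho>_def pos_divide_le_eq mult.commute)
qed

end
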